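(* Let $q$ be a prime power and $h\ge 2$, $r\ge 1$ integers. Then the generalized cylinder conjecture is false for $(v,r,q^h)$ for every integer $v$ with $2h+r\le v\le 2h+r+q-2$; that is, for each such $v$ there exists a $(q^h)^r$-divisible spanning set of $(q^h)^{r+1}$ points in $\mathrm{PG}(v-1,q^h)$ that is not an $(r+1)$-cylinder.
   Context: For a prime power $Q$, $\mathrm{PG}(v-1,Q)$ is the projective space of $\mathbb{F}_Q^v$; a $k$-space is a $k$-dimensional subspace (points are $1$-spaces, hyperplanes $(v-1)$-spaces). A set $\mathcal{S}$ of points is spanning if its points span $\mathbb{F}_Q^v$, and it is $Q^r$-divisible if $|\mathcal{S}\cap H|\equiv|\mathcal{S}|\pmod{Q^r}$ for every hyperplane $H$. An $(r+1)$-cylinder over $\mathbb{F}_Q$ is a multiset of $Q^{r+1}$ points which arises as the union (counted with multiplicity) of the point sets $L_1\setminus F,\dots,L_Q\setminus F$, where $L_1,\dots,L_Q$ are $(r+1)$-spaces and $F$ is an $r$-space contained in every $L_i$. The generalized cylinder conjecture is true for $(v,r,Q)$ if every $Q^r$-divisible spanning set of $Q^{r+1}$ points in $\mathrm{PG}(v-1,Q)$ is an $(r+1)$-cylinder, and false otherwise. *)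

theory Defs
  imports Complex_Main "HOL-Library.Multiset" "HOL-Library.Function_Algebras" "HOL-Library.Cardinality" "HOL-Computational_Algebra.Primes"
begin

text \<open>The vector space F^v is modelled as functions nat => F vanishing outside {0..<v},
  with pointwise scalar multiplication.\<close>

definition smul :: "'a::field \<Rightarrow> (nat \<Rightarrow> 'a) \<Rightarrow> (nat \<Rightarrow> 'a)" where
  "smul c x = (\<lambda>i. c * x i)"

definition ambient :: "nat \<Rightarrow> (nat \<Rightarrow> 'a::field) set" where
  "ambient v = {x. \<forall>i\<ge>v. x i = 0}"

text \<open>k-spaces of PG(v-1,F): k-dimensional subspaces of F^v.\<close>
definition kspaces :: "nat \<Rightarrow> nat \<Rightarrow> (nat \<Rightarrow> 'a::field) set set" where
  "kspaces v k = {W. W \<subseteq> ambient v \<and> module.subspace smul W \<and> vector_space.dim smul W = k}"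

abbreviation points :: "nat \<Rightarrow> (nat \<Rightarrow> 'a::field) set set" where
  "points v \<equiv> kspaces v 1"

definition spanning :: "nat \<Rightarrow> (nat \<Rightarrow> 'a::field) set set \<Rightarrow> bool" where
  "spanning v S \<longleftrightarrow> module.span smul (\<Union>S) = ambient v"

definition divisible :: "nat \<Rightarrow> nat \<Rightarrow> (nat \<Rightarrow> 'a::field) set set \<Rightarrow> bool" where
  "divisible v m S \<longleftrightarrow>
     (\<forall>H \<in> kspaces v (v - 1). card {P \<in> S. P \<subseteq> H} mod m = card S mod m)"

definition is_cylinder :: "nat \<Rightarrow> nat \<Rightarrow> (nat \<Rightarrow> 'a::field) set multiset \<Rightarrow> bool" where
  "is_cylinder v r M \<longleftrightarrow>
     (\<exists>F L. F \<in> kspaces v r \<and>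
        (\<forall>i < CARD('a). L i \<in> kspaces v (r + 1) \<and> F \<subseteq> L i) \<and>
        M = (\<Sum>i < CARD('a). mset_set {P \<in> points v. P \<subseteq> L i \<and> \<not> P \<subseteq> F}))"

definition gen_cylinder_conj :: "'a::field itself \<Rightarrow> nat \<Rightarrow> nat \<Rightarrow> bool" where
  "gen_cylinder_conj TYPE('a) v r \<longleftrightarrow>
     (\<forall>S :: (nat \<Rightarrow> 'a) set set.
        S \<subseteq> points v \<and> card S = CARD('a) ^ (r + 1) \<and>
        divisible v (CARD('a) ^ r) S \<and> spanning v S
        \<longrightarrow> is_cylinder v r (mset_set S))"

end

theory Submission
  imports Defs "HOL-Number_Theory.Residues" "HOL-Computational_Algebra.Polynomial"
begin

text \<open>Let \<open>Q = q\<^sup>h\<close> and let \<open>T\<close> be the subfield of order \<open>q\<close>, the fixed field of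
  \<open>x \<mapsto> x\<^sup>q\<close>. Take the \<open>Q\<^sup>r\<^sup>+\<^sup>1\<close> points spanned by the vectors
  \<open>(1, y\<^sub>1, \<dots>, y\<^sub>r\<^sub>-\<^sub>1, c, t\<^sub>1, \<dots>, t\<^sub>2\<^sub>h\<^sub>-\<^sub>1, [c = c\<^sub>1], \<dots>, [c = c\<^sub>e])\<close> with
  \<open>y\<^sub>i\<close> arbitrary, \<open>c, t\<^sub>i \<in> T\<close> and distinct \<open>c\<^sub>1, \<dots>, c\<^sub>e \<in> T - {0, 1}\<close>, where
  \<open>e = v - r - 2h \<le> q - 2\<close>; the last \<open>e\<close> coordinates only make the set spanning.
  For a hyperplane with linear form \<open>\<phi>\<close>, the vectors with a fixed \<open>c\<close> on it form a coset of the
  kernel of \<open>\<phi>\<close> on the \<open>T\<close>-space of free coordinates, or nothing, and counting these cosets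
  gives \<open>Q\<^sup>r\<close>-divisibility. Every hyperplane missing a cylinder contains its base, but the
  hyperplanes \<open>x\<^sub>0 = 0\<close> and \<open>x\<^sub>i = a x\<^sub>0\<close> (\<open>i \<ge> r\<close>, \<open>a \<notin> T\<close>) all miss the set and
  meet in a space of dimension \<open>r - 1\<close>, so the set is no cylinder.\<close>

section \<open>Additive maps on finite groups\<close>

lemma card_fibre_eq_card_kernel:
  fixes f :: "'b::ab_group_add \<Rightarrow> 'c::ab_group_add"
  assumes diff: "\<And>x y. x \<in> U \<Longrightarrow> y \<in> U \<Longrightarrow> x - y \<in> U"
    and f_diff: "\<And>x y. x \<in> U \<Longrightarrow> y \<in> U \<Longrightarrow> f (x - y) = f x - f y"
    and b: "b \<in> f ` U"
  shows "card {u \<in> U. f u = b} = card {u \<in> U. f u = 0}"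
proof -
  obtain u0 where u0: "u0 \<in> U" "f u0 = b" using b by blast
  have fibre: "{u \<in> U. f u = b} = (\<lambda>k. u0 - k) ` {u \<in> U. f u = 0}"
  proof (intro equalityI subsetI)
    fix u assume "u \<in> {u \<in> U. f u = b}"
    then have "u0 - u \<in> {u \<in> U. f u = 0}" using u0 diff f_diff by auto
    then show "u \<in> (\<lambda>k. u0 - k) ` {u \<in> U. f u = 0}" by (rule rev_image_eqI) simp
  next
    fix u assume "u \<in> (\<lambda>k. u0 - k) ` {u \<in> U. f u = 0}"
    then show "u \<in> {u \<in> U. f u = b}" using u0 diff f_diff by auto
  qed
  have "inj_on (\<lambda>k. u0 - k) {u \<in> U. f u = 0}" by (rule inj_onI) simp
  then show ?thesis unfolding fibre by (rule card_image)
qed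

lemma card_eq_card_image_mult_card_kernel:
  fixes f :: "'b::ab_group_add \<Rightarrow> 'c::ab_group_add"
  assumes "finite U"
    and "\<And>x y. x \<in> U \<Longrightarrow> y \<in> U \<Longrightarrow> x - y \<in> U"
    and "\<And>x y. x \<in> U \<Longrightarrow> y \<in> U \<Longrightarrow> f (x - y) = f x - f y"
  shows "card U = card (f ` U) * card {u \<in> U. f u = 0}"
proof -
  have "card U = (\<Sum>b\<in>f ` U. card {u \<in> U. f u = b})"
    using sum.image_gen[OF \<open>finite U\<close>, of "\<lambda>_. 1 :: nat" f] by simp
  also have "\<dots> = (\<Sum>b\<in>f ` U. card {u \<in> U. f u = 0})"
    using card_fibre_eq_card_kernel[OF assms(2,3)] by simp
  finally show ?thesis by simp
qed

section \<open>The subfield of order q\<close>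

definition is_subfield :: "'a::field set \<Rightarrow> bool" where
  "is_subfield T \<longleftrightarrow> 0 \<in> T \<and> 1 \<in> T \<and> (\<forall>x\<in>T. \<forall>y\<in>T. x - y \<in> T \<and> x * y \<in> T)
     \<and> (\<forall>x\<in>T. inverse x \<in> T)"

text \<open>As \<open>finite_field_power_card_eq_same\<close>, but for a field type that is not known to be
  of class \<open>finite_field\<close>.\<close>
lemma power_card_UNIV_eq:
  fixes x :: "'a::field"
  assumes "finite (UNIV :: 'a set)"
  shows "x ^ CARD('a) = x"
proof (cases "x = 0")
  case False
  have "x * (\<Prod>y\<in>UNIV-{0}. x * y) = x * x ^ (CARD('a) - 1) * \<Prod>(UNIV-{0})"
    using assms by (simp add: prod.distrib mult_ac)
  also have "x * x ^ (CARD('a) - 1) = x ^ CARD('a)"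
    using assms finite_UNIV_card_ge_0 by (metis Suc_diff_1 power_Suc)
  also have "(\<Prod>y\<in>UNIV-{0}. x * y) = (\<Prod>y\<in>UNIV-{0}. y)"
    by (rule prod.reindex_bij_witness[of _ "\<lambda>y. y / x" "\<lambda>y. x * y"]) (use False in auto)
  finally show ?thesis
    using assms by simp
qed (use assms finite_UNIV_card_ge_0 in auto)

lemma frobenius_diff:
  fixes x y :: "'a::comm_ring_1"
  assumes "prime CHAR('a)"
  shows "(x - y) ^ (CHAR('a) ^ n) = x ^ (CHAR('a) ^ n) - y ^ (CHAR('a) ^ n)"
  using freshmans_dream'[OF assms, of "CHAR('a) ^ n" n "x - y" y] by simp

lemma card_roots_power_sum_le:
  fixes c :: "nat \<Rightarrow> 'a::idom"
  assumes "finite E" "m \<in> E" "c m \<noteq> 0" "\<And>e. e \<in> E \<Longrightarrow> e \<le> m"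
  shows "card {x. (\<Sum>e\<in>E. c e * x ^ e) = 0} \<le> m"
proof -
  define P where "P = (\<Sum>e\<in>E. monom (c e) e)"
  have "coeff P m = c m"
    unfolding P_def coeff_sum coeff_monom using assms(1,2) by (simp add: sum.delta)
  then have "P \<noteq> 0" using assms(3) by auto
  moreover have "degree P \<le> m"
    unfolding P_def using assms(1,4) by (intro degree_sum_le order.trans[OF degree_monom_le])
  moreover have "poly P x = (\<Sum>e\<in>E. c e * x ^ e)" for x
    by (simp add: P_def poly_sum poly_monom)
  ultimately show ?thesis using card_poly_roots_bound[of P] by simp
qed

lemma is_subfield_power_fixed:
  assumes "prime CHAR('a::field)"
  shows "is_subfield {x::'a. x ^ (CHAR('a) ^ n) = x}"
  using assms unfolding is_subfield_def
  by (auto simp: frobenius_diff power_mult_distrib power_inverse prime_gt_0_nat)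

text \<open>The map \<open>x \<mapsto> x\<^sup>q - x\<close> is additive with kernel the fixed field, and its image
  is annihilated by the trace polynomial \<open>\<Sum>j<h. X ^ q ^ j\<close>; the two root bounds force
  the kernel to have exactly \<open>q\<close> elements.\<close>
lemma card_power_fixed:
  fixes q :: nat
  assumes char: "prime CHAR('a::field)" and q: "q = CHAR('a) ^ k" "k \<ge> 1"
    and card: "CARD('a) = q ^ h" and h: "h \<ge> 1"
  shows "card {x::'a. x ^ q = x} = q"
proof -
  have q1: "q > 1" using q one_less_power[of "CHAR('a)" k] char prime_gt_1_nat by simp
  have fin: "finite (UNIV :: 'a set)" using card q1 card_ge_0_finite by force
  have frob: "(x - y) ^ (q ^ j) = x ^ (q ^ j) - y ^ (q ^ j)" for x y :: 'a and j
    using frobenius_diff[OF char, of x y "k * j"] q by (simp add: power_mult)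
  define \<psi> where "\<psi> x = x ^ q - x" for x :: 'a
  have \<psi>_diff: "\<psi> (x - y) = \<psi> x - \<psi> y" for x y
    using frob[of x y 1] by (simp add: \<psi>_def)
  have kernel: "{x \<in> UNIV. \<psi> x = 0} = {x. x ^ q = x}" by (auto simp: \<psi>_def)
  have "{x::'a. x ^ q = x} = {x. (\<Sum>e\<in>{1, q}. (if e = q then 1 else -1) * x ^ e) = 0}"
    using q1 by auto
  moreover have "card {x::'a. (\<Sum>e\<in>{1, q}. (if e = q then 1 else -1) * x ^ e) = 0} \<le> q"
    using q1 by (intro card_roots_power_sum_le) auto
  ultimately have card_kernel: "card {x::'a. x ^ q = x} \<le> q" by simp
  have trace_\<psi>: "(\<Sum>e\<in>(\<lambda>j. q ^ j) ` {..<h}. 1 * \<psi> x ^ e) = 0" for x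
  proof -
    have inj: "inj_on (\<lambda>j. q ^ j) {..<h}" using q1 by (simp add: inj_on_def)
    have "\<psi> x ^ (q ^ j) = x ^ (q ^ Suc j) - x ^ (q ^ j)" for j
      using frob[of "x ^ q" x j] by (simp add: \<psi>_def power_mult)
    then have "(\<Sum>e\<in>(\<lambda>j. q ^ j) ` {..<h}. 1 * \<psi> x ^ e) = (\<Sum>j<h. x ^ q ^ Suc j - x ^ q ^ j)"
      by (simp add: sum.reindex[OF inj])
    also have "\<dots> = x ^ (q ^ h) - x ^ (q ^ 0)" by (rule sum_lessThan_telescope)
    finally show ?thesis using power_card_UNIV_eq[OF fin, of x] card by simp
  qed
  have "card (range \<psi>) \<le> card {y::'a. (\<Sum>e\<in>(\<lambda>j. q ^ j) ` {..<h}. 1 * y ^ e) = 0}"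
    using trace_\<psi> by (intro card_mono rev_finite_subset[OF fin]) auto
  also have "\<dots> \<le> q ^ (h - 1)"
    using q1 h by (intro card_roots_power_sum_le) (auto intro: power_increasing)
  finally have card_range: "card (range \<psi>) \<le> q ^ (h - 1)" .
  have "q ^ (h - 1) * q = q ^ h"
    using power_minus_mult[of h q] h by simp
  also have "\<dots> = card (range \<psi>) * card {x::'a. x ^ q = x}"
    using card_eq_card_image_mult_card_kernel[OF fin, of \<psi>] \<psi>_diff card kernel by simp
  also have "\<dots> \<le> q ^ (h - 1) * card {x::'a. x ^ q = x}"
    using card_range by simp
  finally have "q \<le> card {x::'a. x ^ q = x}"
    using q1 by simp
  then show ?thesis
    using card_kernel by (rule antisym[rotated])
qed

lemma exists_subfield_card:
  assumes p: "prime p" and "k \<ge> 1" "h \<ge> 1" and card: "CARD('a::field) = (p ^ k) ^ h"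
  shows "\<exists>T :: 'a set. is_subfield T \<and> card T = p ^ k"
proof -
  have "0 < CARD('a)" using card p by (simp add: prime_gt_0_nat)
  then have "prime CHAR('a)"
    using card_ge_0_finite finite_imp_CHAR_pos prime_CHAR_semidom by blast
  moreover have "CHAR('a) dvd p ^ (k * h)"
    using CHAR_dvd_CARD[where 'a='a] card by (simp add: power_mult)
  ultimately have "CHAR('a) = p"
    using p prime_dvd_power primes_dvd_imp_eq by blast
  then have "is_subfield {x::'a. x ^ (p ^ k) = x}" "card {x::'a. x ^ (p ^ k) = x} = p ^ k"
    using is_subfield_power_fixed[where 'a='a, of k] card_power_fixed[where 'a='a, of "p ^ k" k h]
      \<open>prime CHAR('a)\<close> assms by simp_all
  then show ?thesis by blast
qed

section \<open>Coordinates and subspaces\<close>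

interpretation V: vector_space "smul :: 'a::field \<Rightarrow> (nat \<Rightarrow> 'a) \<Rightarrow> (nat \<Rightarrow> 'a)"
  by unfold_locales (auto simp: smul_def fun_eq_iff algebra_simps)

definition unit_vec :: "nat \<Rightarrow> nat \<Rightarrow> 'a::field" where
  "unit_vec i = (\<lambda>j. if j = i then 1 else 0)"

text \<open>\<open>smul_apply\<close> and \<open>unit_vec_apply\<close> are not simp rules: the simplifier would
  eta-expand them into the unapplied \<open>smul\<close> of \<open>V.span\<close>.\<close>
lemma smul_apply: "smul c x i = c * x i"
  by (simp add: smul_def)

lemma unit_vec_apply: "unit_vec i j = (if j = i then 1 else 0)"
  by (simp add: unit_vec_def)

lemma subspace_ambient: "V.subspace (ambient v :: (nat \<Rightarrow> 'a::field) set)"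
  by (auto simp: V.subspace_def ambient_def smul_apply)

lemma span_singleton_subset_iff:
  assumes "V.subspace H"
  shows "V.span {x} \<subseteq> H \<longleftrightarrow> x \<in> H"
  using assms V.span_base[of x "{x}"] V.span_minimal[of "{x}" H] by blast

lemma supported_subset_span_unit_vec:
  assumes "finite I"
  shows "{x::nat \<Rightarrow> 'a::field. \<forall>i. i \<notin> I \<longrightarrow> x i = 0} \<subseteq> V.span (unit_vec ` I)"
  using assms
proof (induction I rule: finite_induct)
  case empty
  have "x = 0" if "\<forall>i. x i = (0::'a)" for x :: "nat \<Rightarrow> 'a"
    using that by (simp add: fun_eq_iff)
  then show ?case using V.span_zero by auto
next
  case (insert i I)
  show ?case
  proof
    fix x :: "nat \<Rightarrow> 'a" assume x: "x \<in> {x. \<forall>j. j \<notin> insert i I \<longrightarrow> x j = 0}"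
    have "x - smul (x i) (unit_vec i) \<in> {x. \<forall>j. j \<notin> I \<longrightarrow> x j = 0}"
      using x by (auto simp: smul_apply unit_vec_apply)
    then have "x - smul (x i) (unit_vec i) \<in> V.span (unit_vec ` I)"
      using insert.IH by blast
    then have "x - smul (x i) (unit_vec i) \<in> V.span (unit_vec ` insert i I)"
      using V.span_mono[of "unit_vec ` I" "unit_vec ` insert i I"] by blast
    then show "x \<in> V.span (unit_vec ` insert i I)"
      using V.span_insert[of "unit_vec i" "unit_vec ` insert i I"] by auto
  qed
qed

lemma ambient_eq_span_unit_vec:
  "ambient v = V.span (unit_vec ` {..<v} :: (nat \<Rightarrow> 'a::field) set)"
proof
  show "ambient v \<subseteq> V.span (unit_vec ` {..<v} :: (nat \<Rightarrow> 'a::field) set)"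
    using supported_subset_span_unit_vec[of "{..<v}"] by (auto simp: ambient_def)
  show "V.span (unit_vec ` {..<v}) \<subseteq> (ambient v :: (nat \<Rightarrow> 'a::field) set)"
    by (rule V.span_minimal[OF _ subspace_ambient]) (auto simp: ambient_def unit_vec_apply)
qed

lemma independent_unit_vec: "V.independent (unit_vec ` I :: (nat \<Rightarrow> 'a::field) set)"
proof
  assume "V.dependent (unit_vec ` I :: (nat \<Rightarrow> 'a::field) set)"
  then obtain i where "i \<in> I" and i: "unit_vec i \<in> V.span (unit_vec ` I - {unit_vec i :: nat \<Rightarrow> 'a})"
    unfolding V.dependent_def by blast
  have "V.span (unit_vec ` I - {unit_vec i}) \<subseteq> {x :: nat \<Rightarrow> 'a. x i = 0}"
    by (rule V.span_minimal) (auto simp: V.subspace_def smul_apply unit_vec_apply)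
  then show False using i by (auto simp: unit_vec_apply)
qed

lemma dim_ambient: "V.dim (ambient v :: (nat \<Rightarrow> 'a::field) set) = v"
proof -
  have "inj_on (unit_vec :: nat \<Rightarrow> nat \<Rightarrow> 'a) {..<v}"
    by (rule inj_onI) (metis unit_vec_apply one_neq_zero)
  then show ?thesis
    unfolding ambient_eq_span_unit_vec V.dim_span_eq_card_independent[OF independent_unit_vec]
    by (simp add: card_image)
qed

lemma obtain_finite_basis_ambient:
  assumes "W \<subseteq> (ambient v :: (nat \<Rightarrow> 'a::field) set)"
  obtains B where "B \<subseteq> W" "V.independent B" "W \<subseteq> V.span B" "card B = V.dim W" "finite B"
proof -
  obtain B where B: "B \<subseteq> W" "V.independent B" "W \<subseteq> V.span B" "card B = V.dim W"
    using V.basis_exists by blast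
  moreover have "finite B"
    using V.independent_span_bound[of "unit_vec ` {..<v}" B] B assms ambient_eq_span_unit_vec[of v]
    by auto
  ultimately show ?thesis using that by blast
qed

lemma dim_mono_ambient:
  assumes "W \<subseteq> W'" "W' \<subseteq> (ambient v :: (nat \<Rightarrow> 'a::field) set)"
  shows "V.dim W \<le> V.dim W'"
proof -
  obtain B where "B \<subseteq> W'" "W' \<subseteq> V.span B" "card B = V.dim W'" "finite B"
    using obtain_finite_basis_ambient[OF assms(2)] by metis
  then show ?thesis using V.dim_le_card[of W B] assms(1) by auto
qed

lemma dim_insert_ambient:
  assumes H: "V.subspace H" "H \<subseteq> (ambient v :: (nat \<Rightarrow> 'a::field) set)" and "w \<notin> H"
  shows "V.dim (insert w H) = V.dim H + 1"
proof -
  obtain B where B: "B \<subseteq> H" "V.independent B" "H \<subseteq> V.span B" "card B = V.dim H" "finite B"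
    using obtain_finite_basis_ambient[OF H(2)] by blast
  have "V.span B = H"
    using B(1,3) V.span_minimal[OF B(1) H(1)] by blast
  then have w: "w \<notin> V.span B" using \<open>w \<notin> H\<close> by simp
  have "V.span H = V.span B" using \<open>V.span B = H\<close> V.span_span by metis
  then have "V.span (insert w H) = V.span (insert w B)"
    unfolding V.span_insert by simp
  then have "V.dim (insert w H) = card (insert w B)"
    using V.dim_span_eq_card_independent[OF V.independent_insertI[OF w B(2)]] V.dim_span
    by metis
  also have "\<dots> = V.dim H + 1"
    using B(4,5) w V.span_base[of w B] by (auto simp: card_insert_if)
  finally show ?thesis .
qed

lemma subspace_eq_ambient_of_dim:
  assumes W: "V.subspace W" "W \<subseteq> (ambient v :: (nat \<Rightarrow> 'a::field) set)" and "v \<le> V.dim W"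
  shows "W = ambient v"
proof (rule ccontr)
  assume "W \<noteq> ambient v"
  then obtain x where x: "x \<in> ambient v" "x \<notin> W" using W by blast
  have "V.dim (insert x W) \<le> V.dim (ambient v :: (nat \<Rightarrow> 'a) set)"
    using x W by (intro dim_mono_ambient[of _ _ v]) auto
  then show False
    using dim_insert_ambient[OF W x(2)] \<open>v \<le> V.dim W\<close> dim_ambient[of v, where 'a='a] by simp
qed

lemma hyperplane_span_insert:
  assumes H: "H \<in> kspaces v (v - 1)" and "v \<ge> 1"
    and w: "w \<in> ambient v" "w \<notin> (H :: (nat \<Rightarrow> 'a::field) set)"
  shows "V.span (insert w H) = ambient v"
proof (rule subspace_eq_ambient_of_dim[OF V.subspace_span])
  have H': "V.subspace H" "H \<subseteq> ambient v" "V.dim H = v - 1"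
    using H by (auto simp: kspaces_def)
  show "V.span (insert w H) \<subseteq> ambient v"
    using w H' by (intro V.span_minimal subspace_ambient) auto
  show "v \<le> V.dim (V.span (insert w H))"
    using dim_insert_ambient[OF H'(1,2) w(2)] H'(3) \<open>v \<ge> 1\<close> by simp
qed

lemma hyperplaneI:
  assumes H: "V.subspace H" "H \<subseteq> (ambient v :: (nat \<Rightarrow> 'a::field) set)"
    and w: "w \<in> ambient v" "w \<notin> H" and "ambient v \<subseteq> V.span (insert w H)"
  shows "H \<in> kspaces v (v - 1)"
proof -
  have "V.span (insert w H) = ambient v"
    using w H assms(5) by (intro antisym V.span_minimal subspace_ambient) auto
  then have "V.dim (insert w H) = v"
    using dim_ambient[of v, where 'a='a] V.dim_span by metis
  then show ?thesis
    using dim_insert_ambient[OF H w(2)] H by (simp add: kspaces_def)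
qed

lemma coordinate_hyperplane:
  assumes "i \<noteq> j" "i < v"
  shows "{x \<in> ambient v. x i = (c::'a::field) * x j} \<in> kspaces v (v - 1)"
proof -
  let ?H = "{x \<in> ambient v. x i = c * x j}"
  have "V.subspace ?H"
    by (auto simp: V.subspace_def ambient_def smul_apply algebra_simps)
  moreover have w: "unit_vec i \<in> ambient v" "unit_vec i \<notin> ?H"
    using assms by (auto simp: ambient_def unit_vec_apply)
  moreover have "ambient v \<subseteq> V.span (insert (unit_vec i) ?H)"
  proof
    fix x :: "nat \<Rightarrow> 'a" assume "x \<in> ambient v"
    then have "x - smul (x i - c * x j) (unit_vec i) \<in> ?H"
      using assms by (auto simp: ambient_def smul_apply unit_vec_apply)
    then have "x - smul (x i - c * x j) (unit_vec i) \<in> V.span ?H"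
      by (rule V.span_base)
    then show "x \<in> V.span (insert (unit_vec i) ?H)"
      unfolding V.span_insert by blast
  qed
  ultimately show ?thesis by (intro hyperplaneI) auto
qed

lemma span_singleton_mem_points:
  assumes "x \<in> (ambient v :: (nat \<Rightarrow> 'a::field) set)" "x \<noteq> 0"
  shows "V.span {x} \<in> points v"
proof -
  have "V.dim (V.span {x}) = 1"
    using V.dim_span_eq_card_independent[of "{x}"] assms(2) by simp
  moreover have "V.span {x} \<subseteq> ambient v"
    using assms by (intro V.span_minimal subspace_ambient) auto
  ultimately show ?thesis by (simp add: kspaces_def)
qed

lemma dim_le_card_support:
  assumes "finite I" "W \<subseteq> {x::nat \<Rightarrow> 'a::field. \<forall>j. j \<notin> I \<longrightarrow> x j = 0}"
  shows "V.dim W \<le> card I"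
proof -
  have "V.dim W \<le> card (unit_vec ` I :: (nat \<Rightarrow> 'a) set)"
    using assms supported_subset_span_unit_vec[OF assms(1)] by (intro V.dim_le_card) auto
  also have "\<dots> \<le> card I" by (rule card_image_le[OF \<open>finite I\<close>])
  finally show ?thesis .
qed

lemma finite_ambient:
  assumes "finite (UNIV :: 'a set)"
  shows "finite (ambient v :: (nat \<Rightarrow> 'a::field) set)"
proof (rule inj_on_finite[of "\<lambda>x. restrict x {..<v}" _ "PiE {..<v} (\<lambda>_. UNIV)"])
  show "inj_on (\<lambda>x. restrict x {..<v}) (ambient v :: (nat \<Rightarrow> 'a) set)"
  proof (rule inj_onI, rule ext)
    fix x y :: "nat \<Rightarrow> 'a" and i
    assume "x \<in> ambient v" "y \<in> ambient v" "restrict x {..<v} = restrict y {..<v}"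
    then show "x i = y i"
      by (cases "i < v") (auto simp: ambient_def dest: fun_cong[of _ _ i])
  qed
  show "finite (PiE {..<v} (\<lambda>_. UNIV :: 'a set))"
    using assms by (intro finite_PiE) auto
  show "(\<lambda>x. restrict x {..<v}) ` ambient v \<subseteq> PiE {..<v} (\<lambda>_. UNIV)"
    by (auto simp: PiE_def extensional_def)
qed

lemma finite_points:
  assumes "finite (UNIV :: 'a set)"
  shows "finite (points v :: (nat \<Rightarrow> 'a::field) set set)"
proof (rule finite_subset)
  show "points v \<subseteq> Pow (ambient v :: (nat \<Rightarrow> 'a) set)" by (auto simp: kspaces_def)
  show "finite (Pow (ambient v :: (nat \<Rightarrow> 'a) set))" using finite_ambient[OF assms] by simp
qed

lemma card_functions_coordinatewise:
  assumes "finite I"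
  shows "card {u. (\<forall>i\<in>I. u i \<in> D i) \<and> (\<forall>i. i \<notin> I \<longrightarrow> u i = z)} = (\<Prod>i\<in>I. card (D i))"
proof -
  define extend where "extend f i = (if i \<in> I then f i else z)" for f i
  have "{u. (\<forall>i\<in>I. u i \<in> D i) \<and> (\<forall>i. i \<notin> I \<longrightarrow> u i = z)} = extend ` PiE I D"
  proof (intro equalityI subsetI)
    fix u assume u: "u \<in> {u. (\<forall>i\<in>I. u i \<in> D i) \<and> (\<forall>i. i \<notin> I \<longrightarrow> u i = z)}"
    then have "u = extend (restrict u I)" by (auto simp: extend_def)
    moreover have "restrict u I \<in> PiE I D" using u by auto
    ultimately show "u \<in> extend ` PiE I D" by blast
  qed (auto simp: extend_def)
  moreover have "inj_on extend (PiE I D)"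
  proof (rule inj_onI, rule PiE_ext)
    fix f g i assume "extend f = extend g" "i \<in> I"
    then have "extend f i = extend g i" by simp
    then show "f i = g i" using \<open>i \<in> I\<close> by (simp add: extend_def)
  qed
  ultimately show ?thesis by (simp add: card_image card_PiE[OF assms])
qed

section \<open>Hyperplanes and cylinders\<close>

lemma hyperplane_functional:
  assumes H: "H \<in> kspaces v (v - 1)" and "v \<ge> 1"
  obtains \<phi> :: "(nat \<Rightarrow> 'a::field) \<Rightarrow> 'a" where
    "\<And>x y. x \<in> ambient v \<Longrightarrow> y \<in> ambient v \<Longrightarrow> \<phi> (x + y) = \<phi> x + \<phi> y"
    "\<And>c x. x \<in> ambient v \<Longrightarrow> \<phi> (smul c x) = c * \<phi> x"
    "\<And>x. x \<in> ambient v \<Longrightarrow> \<phi> x = 0 \<longleftrightarrow> x \<in> H"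
proof -
  have H': "V.subspace H" "H \<subseteq> ambient v" "V.dim H = v - 1"
    using H by (auto simp: kspaces_def)
  then have span_H: "V.span H = H" by simp
  have "\<not> ambient v \<subseteq> H"
  proof
    assume "ambient v \<subseteq> H"
    then have "V.dim (ambient v :: (nat \<Rightarrow> 'a) set) \<le> V.dim H"
      by (rule dim_mono_ambient[OF _ H'(2)])
    then show False using dim_ambient[of v, where 'a='a] H'(3) \<open>v \<ge> 1\<close> by simp
  qed
  then obtain w where w: "w \<in> ambient v" "w \<notin> H" by blast
  have unique: "a = b" if "x - smul a w \<in> H" "x - smul b w \<in> H" for x a b
  proof (rule ccontr)
    assume "a \<noteq> b"
    have "smul (inverse (a - b)) ((x - smul b w) - (x - smul a w)) \<in> H"
      using V.subspace_scale[OF H'(1) V.subspace_diff[OF H'(1) that(2,1)]] .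
    moreover have "(x - smul b w) - (x - smul a w) = smul (a - b) w"
      by (simp add: fun_eq_iff smul_apply algebra_simps)
    then have "smul (inverse (a - b)) ((x - smul b w) - (x - smul a w)) = w"
      using \<open>a \<noteq> b\<close> by (simp add: V.scale_scale)
    ultimately show False using w(2) by simp
  qed
  define \<phi> where "\<phi> x = (THE a. x - smul a w \<in> H)" for x
  have \<phi>_eq: "\<phi> x = a" if "x - smul a w \<in> H" for x a
    unfolding \<phi>_def by (rule the_equality) (use that unique in blast)+
  have \<phi>_mem: "x - smul (\<phi> x) w \<in> H" if "x \<in> ambient v" for x
  proof -
    have "x \<in> V.span (insert w H)"
      using hyperplane_span_insert[OF H \<open>v \<ge> 1\<close> w] that by blast
    then obtain a where "x - smul a w \<in> H"
      unfolding V.span_insert span_H by blast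
    then show ?thesis using \<phi>_eq by simp
  qed
  show ?thesis
  proof
    fix x y :: "nat \<Rightarrow> 'a" assume "x \<in> ambient v" "y \<in> ambient v"
    then have "(x - smul (\<phi> x) w) + (y - smul (\<phi> y) w) \<in> H"
      using \<phi>_mem V.subspace_add[OF H'(1)] by blast
    moreover have "(x - smul (\<phi> x) w) + (y - smul (\<phi> y) w) = (x + y) - smul (\<phi> x + \<phi> y) w"
      by (simp add: fun_eq_iff smul_apply algebra_simps)
    ultimately show "\<phi> (x + y) = \<phi> x + \<phi> y" using \<phi>_eq by simp
  next
    fix c and x :: "nat \<Rightarrow> 'a" assume "x \<in> ambient v"
    then have "smul c (x - smul (\<phi> x) w) \<in> H"
      using \<phi>_mem V.subspace_scale[OF H'(1)] by blast
    moreover have "smul c (x - smul (\<phi> x) w) = smul c x - smul (c * \<phi> x) w"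
      by (simp add: fun_eq_iff smul_apply algebra_simps)
    ultimately show "\<phi> (smul c x) = c * \<phi> x" using \<phi>_eq by simp
  next
    fix x :: "nat \<Rightarrow> 'a" assume "x \<in> ambient v"
    have "smul 0 w = 0" by (simp add: fun_eq_iff smul_apply)
    then show "\<phi> x = 0 \<longleftrightarrow> x \<in> H"
      using \<phi>_mem[OF \<open>x \<in> ambient v\<close>] \<phi>_eq[of x 0] by auto
  qed
qed

lemma hyperplane_meets_outside:
  assumes H: "H \<in> kspaces v (v - 1)" and "v \<ge> 1"
    and F: "V.subspace F" "F \<subseteq> L" "\<not> F \<subseteq> H"
    and L: "V.subspace L" "L \<subseteq> (ambient v :: (nat \<Rightarrow> 'a::field) set)" "V.dim F < V.dim L"
  obtains x where "x \<in> L" "x \<in> H" "x \<notin> F"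
proof -
  obtain w where w: "w \<in> F" "w \<notin> H" using F(3) by blast
  have "\<not> L \<subseteq> F"
  proof
    assume "L \<subseteq> F"
    then have "V.dim L \<le> V.dim F" using F(2) L(2) by (intro dim_mono_ambient) auto
    then show False using L(3) by simp
  qed
  then obtain y where y: "y \<in> L" "y \<notin> F" by blast
  have "y \<in> V.span (insert w H)"
    using hyperplane_span_insert[OF H \<open>v \<ge> 1\<close>, of w] w F(2) y(1) L(2) by blast
  moreover have "V.span H = H" using H by (simp add: kspaces_def)
  ultimately obtain k where "y - smul k w \<in> H"
    unfolding V.span_insert by blast
  moreover have "y - smul k w \<in> L"
    using V.subspace_diff[OF L(1) y(1) V.subspace_scale[OF L(1)]] w(1) F(2) by blast
  moreover have "y - smul k w \<notin> F"
  proof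
    assume "y - smul k w \<in> F"
    then have "(y - smul k w) + smul k w \<in> F"
      using V.subspace_add[OF F(1) _ V.subspace_scale[OF F(1) w(1)]] by blast
    then show False using y(2) by simp
  qed
  ultimately show ?thesis using that by blast
qed

lemma cylinder_base_in_avoiding_hyperplane:
  fixes M :: "(nat \<Rightarrow> 'a::field) set multiset"
  assumes cyl: "is_cylinder v r M" and fin: "finite (UNIV :: 'a set)" and "v \<ge> 1"
  obtains F :: "(nat \<Rightarrow> 'a) set" where "F \<in> kspaces v r"
    "\<And>H. H \<in> kspaces v (v - 1) \<Longrightarrow> (\<forall>P \<in># M. \<not> P \<subseteq> H) \<Longrightarrow> F \<subseteq> H"
proof -
  obtain F L where F: "F \<in> kspaces v r"
    and L: "\<And>i. i < CARD('a) \<Longrightarrow> L i \<in> kspaces v (r + 1) \<and> F \<subseteq> L i"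
    and M: "M = (\<Sum>i < CARD('a). mset_set {P \<in> points v. P \<subseteq> L i \<and> \<not> P \<subseteq> F})"
    using cyl unfolding is_cylinder_def by blast
  have "0 < CARD('a)" using fin by (simp add: finite_UNIV_card_ge_0)
  then have L0: "L 0 \<in> kspaces v (r + 1)" "F \<subseteq> L 0" using L by auto
  have "F \<subseteq> H" if H: "H \<in> kspaces v (v - 1)" and avoid: "\<forall>P \<in># M. \<not> P \<subseteq> H" for H
  proof (rule ccontr)
    assume "\<not> F \<subseteq> H"
    then obtain x where x: "x \<in> L 0" "x \<in> H" "x \<notin> F"
      using hyperplane_meets_outside[OF H \<open>v \<ge> 1\<close>, of F "L 0"] F L0 by (auto simp: kspaces_def)
    define P where "P = V.span {x}"
    have "x \<noteq> 0" using x(3) F V.subspace_0 by (auto simp: kspaces_def)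
    then have "P \<in> {P \<in> points v. P \<subseteq> L 0 \<and> \<not> P \<subseteq> F}"
      using x L0 F V.span_base[of x "{x}"] span_singleton_mem_points[of x v]
      by (auto simp: P_def kspaces_def span_singleton_subset_iff)
    then have "P \<in># M"
      unfolding M using \<open>0 < CARD('a)\<close> finite_points[OF fin]
      by (auto simp: set_mset_sum)
    moreover have "P \<subseteq> H"
      using x(2) H by (auto simp: P_def kspaces_def span_singleton_subset_iff)
    ultimately show False using avoid by blast
  qed
  then show ?thesis using F that by blast
qed

section \<open>Divisibility of fibre counts\<close>

lemma card_subfield_mult_card_le:
  fixes G :: "'a::field set"
  assumes fin: "finite (UNIV :: 'a set)" and T: "is_subfield T"
    and G_diff: "\<And>x y. x \<in> G \<Longrightarrow> y \<in> G \<Longrightarrow> x - y \<in> G"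
    and G_scale: "\<And>t g. t \<in> T \<Longrightarrow> g \<in> G \<Longrightarrow> t * g \<in> G"
    and "y \<notin> G"
  shows "card T * card G \<le> CARD('a)"
proof -
  have "inj_on (\<lambda>(t, g). g + t * y) (T \<times> G)"
  proof (rule inj_onI, clarify)
    fix t g t' g' assume *: "t \<in> T" "g \<in> G" "t' \<in> T" "g' \<in> G" "g + t * y = g' + t' * y"
    show "t = t' \<and> g = g'"
    proof (cases "t = t'")
      case False
      then have "y = inverse (t - t') * (g' - g)"
        using *(5) by (simp add: field_simps)
      moreover have "inverse (t - t') * (g' - g) \<in> G"
        using * T G_diff G_scale unfolding is_subfield_def by blast
      ultimately show ?thesis using \<open>y \<notin> G\<close> by simp
    qed (use *(5) in simp)
  qed
  then have "card (T \<times> G) \<le> CARD('a)"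
    using fin by (intro card_inj_on_le) auto
  then show ?thesis by (simp add: card_cartesian_product)
qed

lemma prime_power_dvd_of_dvd_le:
  fixes p :: nat
  assumes "prime p" "d dvd p ^ N" "p ^ m \<le> d"
  shows "p ^ m dvd d"
proof -
  obtain i where i: "d = p ^ i" using divides_primepow_nat assms(1,2) by blast
  then have "m \<le> i" using assms(3) prime_gt_1_nat[OF assms(1)] power_le_imp_le_exp by blast
  then show ?thesis by (simp add: i le_imp_power_dvd)
qed

text \<open>If the image of \<open>\<phi>\<close> is everything, the \<open>q\<close> fibres together have \<open>Q\<^sup>r\<close> elements;
  otherwise the image is a proper \<open>T\<close>-subspace, so the kernel has at least \<open>Q\<^sup>r\<close> elements and,
  being a \<open>p\<close>-group, a multiple of \<open>Q\<^sup>r\<close>.\<close>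
lemma dvd_sum_card_fibres:
  fixes \<phi> :: "'b::ab_group_add \<Rightarrow> 'a::field"
  assumes p: "prime p" "CARD('a) = p ^ n" and T: "is_subfield T"
    and U: "finite U" "\<And>x y. x \<in> U \<Longrightarrow> y \<in> U \<Longrightarrow> x - y \<in> U"
    and \<phi>_diff: "\<And>x y. x \<in> U \<Longrightarrow> y \<in> U \<Longrightarrow> \<phi> (x - y) = \<phi> x - \<phi> y"
    and \<phi>_scale: "\<And>t g. t \<in> T \<Longrightarrow> g \<in> \<phi> ` U \<Longrightarrow> t * g \<in> \<phi> ` U"
    and card: "card T * card U = CARD('a) ^ (r + 1)"
  shows "CARD('a) ^ r dvd (\<Sum>c\<in>T. card {u \<in> U. \<phi> u = b c})"
proof -
  define K where "K = {u \<in> U. \<phi> u = 0}"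
  have Q: "CARD('a) > 0" using p by (simp add: prime_gt_0_nat)
  have fibre: "card {u \<in> U. \<phi> u = b c} = (if b c \<in> \<phi> ` U then card K else 0)" for c
  proof (cases "b c \<in> \<phi> ` U")
    case False
    then have empty: "{u \<in> U. \<phi> u = b c} = {}" by force
    show ?thesis using False unfolding empty by simp
  qed (simp add: card_fibre_eq_card_kernel[OF U(2) \<phi>_diff] K_def)
  have UK: "card U = card (\<phi> ` U) * card K"
    unfolding K_def by (rule card_eq_card_image_mult_card_kernel[OF U \<phi>_diff])
  show ?thesis
  proof (cases "\<phi> ` U = UNIV")
    case True
    then have "CARD('a) * (card T * card K) = CARD('a) * CARD('a) ^ r"
      using card UK by (simp add: ac_simps)
    then show ?thesis using fibre True Q by simp
  next
    case False
    then obtain y where "y \<notin> \<phi> ` U" by blast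
    have "\<phi> x - \<phi> x' \<in> \<phi> ` U" if "x \<in> U" "x' \<in> U" for x x'
      using that U(2) \<phi>_diff[OF that, symmetric] by blast
    then have "card T * card (\<phi> ` U) \<le> CARD('a)"
      using card_subfield_mult_card_le[OF card_ge_0_finite[OF Q] T _ \<phi>_scale \<open>y \<notin> \<phi> ` U\<close>] by blast
    have "CARD('a) * CARD('a) ^ r = card T * card (\<phi> ` U) * card K"
      using card UK by (simp add: mult.assoc)
    also have "\<dots> \<le> CARD('a) * card K"
      by (rule mult_le_mono1) fact
    finally have "p ^ (n * r) \<le> card K" using Q p(2) prime_gt_0_nat[OF p(1)] by (simp add: power_mult)
    moreover have "card K dvd card T * card U" using UK by simp
    then have "card K dvd p ^ (n * (r + 1))" unfolding power_mult using card p(2) by simp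
    ultimately have "p ^ (n * r) dvd card K"
      by (rule prime_power_dvd_of_dvd_le[OF p(1), rotated])
    then have "CARD('a) ^ r dvd card K" using p(2) by (simp add: power_mult)
    then show ?thesis by (intro dvd_sum) (simp add: fibre)
  qed
qed

section \<open>The counterexample\<close>

text \<open>A vector \<open>(1, y\<^sub>1, \<dots>, c, t\<^sub>1, \<dots>, [c = c\<^sub>1], \<dots>)\<close> is written \<open>offset c + u\<close>,
  where \<open>u \<in> U\<close> holds the free coordinates \<open>y\<^sub>i, t\<^sub>i\<close>; the indicator coordinates are indexed
  by \<open>i \<in> {r + 2h..<v}\<close>, with \<open>c\<^sub>k\<close> written \<open>ct i\<close>.\<close>
locale cylinder_counterexample =
  fixes T :: "'a::field set" and p n h r v :: nat and ct :: "nat \<Rightarrow> 'a"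
  assumes prime: "prime p" and card_UNIV: "CARD('a) = p ^ n"
    and subfield: "is_subfield T" and card_UNIV_subfield: "CARD('a) = card T ^ h"
    and h: "2 \<le> h" and r: "1 \<le> r" and v: "r + 2 * h \<le> v"
    and ct: "ct ` {r + 2 * h..<v} \<subseteq> T - {0, 1}" "inj_on ct {r + 2 * h..<v}"
begin

definition offset :: "'a \<Rightarrow> nat \<Rightarrow> 'a" where
  "offset c i = (if i = 0 then 1 else if i = r then c
     else if i \<in> {r + 2 * h..<v} \<and> ct i = c then 1 else 0)"

definition U :: "(nat \<Rightarrow> 'a) set" where
  "U = {u. (\<forall>i \<in> {r<..<r + 2 * h}. u i \<in> T) \<and> (\<forall>i. i \<notin> {1..<r} \<union> {r<..<r + 2 * h} \<longrightarrow> u i = 0)}"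

definition vecs :: "(nat \<Rightarrow> 'a) set" where
  "vecs = (\<lambda>(c, u). offset c + u) ` (T \<times> U)"

definition pts :: "(nat \<Rightarrow> 'a) set set" where
  "pts = (\<lambda>x. V.span {x}) ` vecs"

lemma finite_UNIV: "finite (UNIV :: 'a set)"
  by (rule card_ge_0_finite) (simp add: card_UNIV prime_gt_0_nat[OF prime])

lemma zero_in_T: "0 \<in> T" and one_in_T: "1 \<in> T"
  and diff_in_T: "x \<in> T \<Longrightarrow> y \<in> T \<Longrightarrow> x - y \<in> T"
  and mult_in_T: "x \<in> T \<Longrightarrow> y \<in> T \<Longrightarrow> x * y \<in> T"
  using subfield by (auto simp: is_subfield_def)

lemma finite_T: "finite T"
  using finite_UNIV by (rule rev_finite_subset) simp

lemma offset_in_ambient: "offset c \<in> ambient v"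
  using v h by (auto simp: offset_def ambient_def)

lemma offset_r: "offset c r = c"
  using r by (simp add: offset_def)

lemma U_subset_ambient: "U \<subseteq> ambient v"
  using v h by (auto simp: U_def ambient_def)

lemma zero_in_U: "0 \<in> U"
  using zero_in_T by (simp add: U_def)

lemma U_r: "u \<in> U \<Longrightarrow> u r = 0"
  by (simp add: U_def)

lemma finite_U: "finite U"
  using finite_ambient[OF finite_UNIV] U_subset_ambient by (rule finite_subset[rotated])

lemma vecs_subset_ambient: "vecs \<subseteq> ambient v"
  using U_subset_ambient
  by (auto simp: vecs_def intro!: V.subspace_add[OF subspace_ambient] offset_in_ambient)

lemma vecs_0: "x \<in> vecs \<Longrightarrow> x 0 = 1"
  by (auto simp: vecs_def offset_def U_def)

lemma vecs_coord_in_T: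
  assumes "x \<in> vecs" "r \<le> i"
  shows "x i \<in> T"
  using assms zero_in_T one_in_T
  by (cases "i < r + 2 * h") (auto simp: vecs_def offset_def U_def)

lemma inj_on_vecs_param: "inj_on (\<lambda>(c, u). offset c + u) (T \<times> U)"
proof (rule inj_onI, clarify)
  fix c u c' u' assume "u \<in> U" "u' \<in> U" and eq: "offset c + u = offset c' + u'"
  have "(offset c + u) r = (offset c' + u') r" using eq by simp
  then have "c = c'" using \<open>u \<in> U\<close> \<open>u' \<in> U\<close> by (simp add: offset_r U_r)
  then show "c = c' \<and> u = u'" using eq by simp
qed

lemma inj_on_span_vecs: "inj_on (\<lambda>x. V.span {x}) vecs"
proof
  fix x y assume xy: "x \<in> vecs" "y \<in> vecs" "V.span {x} = V.span {y}"
  then obtain c where "y = smul c x"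
    using V.span_base[of y "{y}"] V.span_singleton by blast
  moreover have "c = (smul c x) 0" using vecs_0[OF xy(1)] by (simp add: smul_apply)
  ultimately have "c = 1" using vecs_0[OF xy(2)] by simp
  then show "x = y" using \<open>y = smul c x\<close> by (simp add: smul_def)
qed

lemma card_T_gt_1: "card T > 1"
proof -
  have "card {0, 1::'a} \<le> card T"
    using zero_in_T one_in_T by (intro card_mono finite_T) auto
  then show ?thesis by simp
qed

lemma card_U: "card U = CARD('a) ^ (r - 1) * card T ^ (2 * h - 1)"
proof -
  let ?I = "{1..<r} \<union> {r<..<r + 2 * h}"
  have U_eq: "U = {u. (\<forall>i\<in>?I. u i \<in> (if i < r then UNIV else T)) \<and> (\<forall>i. i \<notin> ?I \<longrightarrow> u i = 0)}"
    by (auto simp: U_def)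
  have "card U = (\<Prod>i\<in>?I. card (if i < r then UNIV else T))"
    unfolding U_eq by (rule card_functions_coordinatewise) simp
  also have "\<dots> = (\<Prod>i\<in>{1..<r}. CARD('a)) * (\<Prod>i\<in>{r<..<r + 2 * h}. card T)"
    by (subst prod.union_disjoint) auto
  finally show ?thesis by simp
qed

lemma card_T_mult_card_U: "card T * card U = CARD('a) ^ (r + 1)"
proof -
  have "card T * card U = CARD('a) ^ (r - 1) * (card T * card T ^ (2 * h - 1))"
    by (simp add: card_U ac_simps)
  also have "card T * card T ^ (2 * h - 1) = CARD('a) ^ 2"
    using h card_UNIV_subfield by (simp flip: power_Suc power_mult) (simp add: mult.commute)
  also have "CARD('a) ^ (r - 1) * CARD('a) ^ 2 = CARD('a) ^ (r + 1)"
    using r by (simp flip: power_add)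
  finally show ?thesis .
qed

lemma card_pts: "card pts = CARD('a) ^ (r + 1)"
  unfolding pts_def vecs_def
  by (simp add: card_image inj_on_span_vecs[unfolded vecs_def] inj_on_vecs_param
      card_cartesian_product card_T_mult_card_U)

lemma pts_subset_points: "pts \<subseteq> points v"
  using vecs_subset_ambient vecs_0 span_singleton_mem_points by (force simp: pts_def)

lemma unit_vec_in_span_vecs:
  assumes "i < v"
  shows "unit_vec i \<in> V.span vecs"
proof -
  have in_vecs: "offset c + u \<in> V.span vecs" if "c \<in> T" "u \<in> U" for c u
    using that by (intro V.span_base) (auto simp: vecs_def)
  have ct_i: "ct i \<in> T" "ct i \<noteq> 0" "ct i \<noteq> 1" if "i \<in> {r + 2 * h..<v}" for i
    using subsetD[OF ct(1) imageI[OF that]] by auto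
  have "offset 0 = unit_vec 0"
    using ct_i by (auto simp: fun_eq_iff offset_def unit_vec_apply)
  then have e0: "unit_vec 0 \<in> V.span vecs"
    using in_vecs[OF zero_in_T zero_in_U] by simp
  have "offset 1 = unit_vec 0 + unit_vec r"
    using ct_i r by (auto simp: fun_eq_iff offset_def unit_vec_apply)
  then have "unit_vec 0 + unit_vec r \<in> V.span vecs"
    using in_vecs[OF one_in_T zero_in_U] by simp
  from V.span_diff[OF this e0] have er: "unit_vec r \<in> V.span vecs" by simp
  consider "i = 0" | "i = r" | "1 \<le> i \<and> i < r \<or> r < i \<and> i < r + 2 * h" | "r + 2 * h \<le> i"
    by linarith
  then show ?thesis
  proof cases
    case 3
    then have "unit_vec i \<in> U"
      using zero_in_T one_in_T by (auto simp: U_def unit_vec_apply)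
    then have "unit_vec 0 + unit_vec i \<in> V.span vecs"
      using in_vecs[OF zero_in_T] \<open>offset 0 = unit_vec 0\<close> by simp
    from V.span_diff[OF this e0] show ?thesis by simp
  next
    case 4
    then have i: "i \<in> {r + 2 * h..<v}" using assms by simp
    have ct_eq: "ct j = ct i \<longleftrightarrow> j = i" if "j \<in> {r + 2 * h..<v}" for j
      using inj_on_eq_iff[OF ct(2) that i] .
    have "offset (ct i) j = (unit_vec 0 + smul (ct i) (unit_vec r) + unit_vec i) j" for j
      using i ct_eq[of j] r h by (auto simp: offset_def unit_vec_apply smul_apply)
    then have "offset (ct i) = unit_vec 0 + smul (ct i) (unit_vec r) + unit_vec i" ..
    then have "unit_vec 0 + smul (ct i) (unit_vec r) + unit_vec i \<in> V.span vecs"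
      using in_vecs[OF ct_i(1)[OF i] zero_in_U] by simp
    from V.span_diff[OF V.span_diff[OF this e0] V.span_scale[OF er, of "ct i"]] show ?thesis by simp
  qed (use e0 er in auto)
qed

lemma spanning_pts: "spanning v pts"
  unfolding spanning_def
proof
  have "V.span {x} \<subseteq> ambient v" if "x \<in> vecs" for x
    using that vecs_subset_ambient by (intro V.span_minimal subspace_ambient) auto
  then have "\<Union>pts \<subseteq> ambient v" by (auto simp: pts_def)
  then show "V.span (\<Union>pts) \<subseteq> ambient v"
    by (rule V.span_minimal[OF _ subspace_ambient])
  have "vecs \<subseteq> \<Union>pts" unfolding pts_def using V.span_base by blast
  then have "unit_vec ` {..<v} \<subseteq> V.span (\<Union>pts)"
    using unit_vec_in_span_vecs V.span_mono by blast
  then show "ambient v \<subseteq> V.span (\<Union>pts)"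
    unfolding ambient_eq_span_unit_vec by (rule V.span_minimal) simp
qed

lemma dvd_card_pts_in_hyperplane:
  assumes H: "H \<in> kspaces v (v - 1)"
  shows "CARD('a) ^ r dvd card {P \<in> pts. P \<subseteq> H}"
proof -
  have "v \<ge> 1" using v r by simp
  obtain \<phi> where \<phi>_add: "\<And>x y. x \<in> ambient v \<Longrightarrow> y \<in> ambient v \<Longrightarrow> \<phi> (x + y) = \<phi> x + \<phi> y"
    and \<phi>_scale: "\<And>c x. x \<in> ambient v \<Longrightarrow> \<phi> (smul c x) = c * \<phi> x"
    and \<phi>_zero: "\<And>x. x \<in> ambient v \<Longrightarrow> \<phi> x = 0 \<longleftrightarrow> x \<in> H"
    using hyperplane_functional[OF H \<open>v \<ge> 1\<close>] by blast
  have U_amb: "u \<in> ambient v" if "u \<in> U" for u using that U_subset_ambient by blast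
  have H_subspace: "V.subspace H" using H by (simp add: kspaces_def)
  have "{P \<in> pts. P \<subseteq> H} = (\<lambda>x. V.span {x}) ` {x \<in> vecs. x \<in> H}"
    using span_singleton_subset_iff[OF H_subspace] by (auto simp: pts_def)
  then have "card {P \<in> pts. P \<subseteq> H} = card {x \<in> vecs. x \<in> H}"
    using inj_on_span_vecs by (simp add: card_image inj_on_subset)
  also have "{x \<in> vecs. x \<in> H}
      = (\<lambda>(c, u). offset c + u) ` (SIGMA c:T. {u \<in> U. \<phi> u = - \<phi> (offset c)})"
  proof -
    have "offset c + u \<in> H \<longleftrightarrow> \<phi> u = - \<phi> (offset c)" if "u \<in> U" for c u
    proof -
      have "offset c + u \<in> ambient v"
        using V.subspace_add[OF subspace_ambient offset_in_ambient U_amb[OF that]] .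
      then have "offset c + u \<in> H \<longleftrightarrow> \<phi> (offset c + u) = 0"
        using \<phi>_zero by blast
      also have "\<dots> \<longleftrightarrow> \<phi> u = - \<phi> (offset c)"
        unfolding \<phi>_add[OF offset_in_ambient U_amb[OF that]] by (metis add.commute eq_neg_iff_add_eq_0)
      finally show ?thesis .
    qed
    then show ?thesis unfolding vecs_def by (auto simp: image_iff)
  qed
  also have "card \<dots> = card (SIGMA c:T. {u \<in> U. \<phi> u = - \<phi> (offset c)})"
    by (rule card_image, rule inj_on_subset[OF inj_on_vecs_param]) auto
  also have "\<dots> = (\<Sum>c\<in>T. card {u \<in> U. \<phi> u = - \<phi> (offset c)})"
    using finite_T finite_U by simp
  finally have count: "card {P \<in> pts. P \<subseteq> H} = (\<Sum>c\<in>T. card {u \<in> U. \<phi> u = - \<phi> (offset c)})" .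
  have "CARD('a) ^ r dvd (\<Sum>c\<in>T. card {u \<in> U. \<phi> u = - \<phi> (offset c)})"
  proof (rule dvd_sum_card_fibres[OF prime card_UNIV subfield finite_U])
    show "x - y \<in> U" if "x \<in> U" "y \<in> U" for x y
      using that diff_in_T by (auto simp: U_def)
    show "\<phi> (x - y) = \<phi> x - \<phi> y" if "x \<in> U" "y \<in> U" for x y
    proof -
      have "x - y \<in> ambient v" using that U_amb V.subspace_diff[OF subspace_ambient] by blast
      from \<phi>_add[OF this U_amb[OF that(2)]] show ?thesis by (simp add: eq_diff_eq)
    qed
    show "t * g \<in> \<phi> ` U" if t: "t \<in> T" and g: "g \<in> \<phi> ` U" for t g
    proof -
      obtain u where "u \<in> U" "g = \<phi> u" using g by blast
      moreover have "smul t u \<in> U"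
        using \<open>u \<in> U\<close> t mult_in_T zero_in_T by (auto simp: U_def smul_apply)
      ultimately show ?thesis using \<phi>_scale[OF U_amb] by (metis image_eqI)
    qed
  qed (rule card_T_mult_card_U)
  then show ?thesis using count by simp
qed

lemma divisible_pts: "divisible v (CARD('a) ^ r) pts"
  using dvd_card_pts_in_hyperplane card_pts by (simp add: divisible_def)

lemma not_cylinder_pts: "\<not> is_cylinder v r (mset_set pts)"
proof
  assume "is_cylinder v r (mset_set pts)"
  moreover have "v \<ge> 1" using v r by simp
  ultimately obtain F where F: "F \<in> kspaces v r"
    and base: "\<And>H. H \<in> kspaces v (v - 1) \<Longrightarrow> (\<forall>P \<in># mset_set pts. \<not> P \<subseteq> H) \<Longrightarrow> F \<subseteq> H"
    using cylinder_base_in_avoiding_hyperplane finite_UNIV by metis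
  have finite_pts: "finite pts" using finite_subset[OF pts_subset_points finite_points[OF finite_UNIV]] .
  have F_sub: "F \<subseteq> {x \<in> ambient v. x i = c * x j}"
    if ij: "i \<noteq> j" "i < v" and miss: "\<And>x. x \<in> vecs \<Longrightarrow> x i \<noteq> c * x j" for i j c
  proof -
    have H: "{x \<in> ambient v. x i = c * x j} \<in> kspaces v (v - 1)"
      by (rule coordinate_hyperplane[OF ij])
    then have "V.subspace {x \<in> ambient v. x i = c * x j}" by (simp add: kspaces_def)
    then have "\<forall>P \<in># mset_set pts. \<not> P \<subseteq> {x \<in> ambient v. x i = c * x j}"
      using miss finite_pts by (auto simp: pts_def span_singleton_subset_iff)
    then show ?thesis by (rule base[OF H])
  qed
  have "card T < CARD('a)"
    using power_strict_increasing[of 1 h "card T"] card_T_gt_1 h card_UNIV_subfield by simp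
  then have "T \<noteq> UNIV" by auto
  then obtain a where "a \<notin> T" by blast
  have F_x0: "F \<subseteq> {x \<in> ambient v. x 0 = 0 * x 1}"
    using v r by (intro F_sub) (auto simp: vecs_0)
  have F_xi: "F \<subseteq> {x \<in> ambient v. x i = a * x 0}" if "r \<le> i" "i < v" for i
    using that r vecs_coord_in_T[OF _ that(1)] \<open>a \<notin> T\<close> by (intro F_sub) (auto simp: vecs_0)
  have "F \<subseteq> {x. \<forall>j. j \<notin> {1..<r} \<longrightarrow> x j = 0}"
  proof (intro subsetI CollectI allI impI)
    fix x j assume "x \<in> F" "j \<notin> {1..<r}"
    then have x0: "x 0 = 0" using F_x0 by auto
    consider "j = 0" | "r \<le> j" "j < v" | "v \<le> j" using \<open>j \<notin> {1..<r}\<close> by force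
    then show "x j = 0"
    proof cases
      case 2
      then show ?thesis using F_xi[OF 2] \<open>x \<in> F\<close> x0 by auto
    next
      case 3
      then show ?thesis using F \<open>x \<in> F\<close> by (auto simp: kspaces_def ambient_def)
    qed (use x0 in simp)
  qed
  then have "V.dim F \<le> card {1..<r}" by (intro dim_le_card_support) simp
  then show False using F r by (simp add: kspaces_def)
qed

end

theorem mainTheorem13:
  fixes q h r v :: nat
  assumes "\<exists>p k. prime p \<and> k \<ge> 1 \<and> q = p ^ k"
    and "h \<ge> 2" and "r \<ge> 1"
    and "2 * h + r \<le> v" and "v \<le> 2 * h + r + q - 2"
    and "CARD('a::field) = q ^ h"
  shows "\<not> gen_cylinder_conj TYPE('a) v r"
proof -
  obtain p k where p: "prime p" "k \<ge> 1" "q = p ^ k" using assms(1) by blast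
  obtain T :: "'a set" where T: "is_subfield T" "card T = q"
    using exists_subfield_card[OF p(1,2), of h] assms(2,6) p(3) by auto
  have "finite T" using T p by (intro card_ge_0_finite) (simp add: prime_gt_0_nat)
  moreover have "card {r + 2 * h..<v} \<le> card (T - {0, 1})"
    using T \<open>finite T\<close> assms(5) by (simp add: card_Diff_subset is_subfield_def)
  ultimately obtain ct where ct: "ct ` {r + 2 * h..<v} \<subseteq> T - {0, 1}" "inj_on ct {r + 2 * h..<v}"
    using card_le_inj[of "{r + 2 * h..<v}" "T - {0, 1}"] by auto
  interpret cylinder_counterexample T p "k * h" h r v ct
    using p assms(2-6) T ct by unfold_locales (auto simp: power_mult)
  show ?thesis
    unfolding gen_cylinder_conj_def
    using pts_subset_points card_pts divisible_pts spanning_pts not_cylinder_pts by blast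
qed

end
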